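(* Let pieces have length $a=2$. There is a bijective correspondence between pyramids of size $m\geq 1$ (with bottom piece covering $]0,2[$) and finite sequences $(p_1,p_2,\dots,p_r)$, $r\geq 1$, of pyramids such that $p_i$ is a right $0$-pyramid if $i$ is odd and a left $1$-pyramid if $i$ is even, and such that $|p_1|+\dots+|p_r|=m$.
   Context: A piece is an open interval $]s,s+a[$ of the real line with $s\in\mathbb Z$ (here $a=2$, so pieces are dimers); two pieces are concurrent iff their intervals intersect. A heap (in the sense of Viennot) is a finite configuration obtained by successively dropping pieces vertically towards the horizontal axis: each dropped piece comes to rest either on the axis or on top of the highest previously placed piece whose interval intersects its own; two dropping orders give the same heap iff they produce the same configuration. A heap is a pyramid if it has a unique bottom (minimal) piece, i.e. exactly one piece rests on the axis. The size $|p|$ is the number of pieces. A pyramid $p$ is a right $s$-pyramid if its bottom piece covers $]s,s+a[$ and is a leftmost piece of $p$ (no piece of $p$ covers $]t,t+a[$ with $t<s$). It is a left $s$-pyramid if its bottom piece covers $]s-a,s[$ and is a rightmost piece of $p$ (no piece of $p$ covers $]t-a,t[$ with $t>s$). *)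

theory Defs
  imports Main
begin

text \<open>A placed piece is a pair (s, h): it covers the open
interval ]s, s+2[ and rests at level h (level 0 = on the horizontal axis).
A heap is the configuration (finite set of placed pieces) obtained by successively
dropping pieces; two dropping orders give the same heap iff they give the same
configuration, so heaps are identified with reachable configurations.\<close>

definition piece_len :: int where "piece_len = 2"

definition concurrent :: "int \<Rightarrow> int \<Rightarrow> bool" where
  "concurrent s t \<longleftrightarrow> \<bar>s - t\<bar> < piece_len"

definition drop_piece :: "(int \<times> nat) set \<Rightarrow> int \<Rightarrow> (int \<times> nat) set" where
  "drop_piece H s =
     insert (s, (if (\<exists>(t,h)\<in>H. concurrent s t)
                 then Suc (Max {h. \<exists>t. (t,h) \<in> H \<and> concurrent s t})
                 else 0)) H"

inductive heap :: "(int \<times> nat) set \<Rightarrow> bool" where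
  heap_empty: "heap {}"
| heap_drop: "heap H \<Longrightarrow> heap (drop_piece H s)"

definition heap_size :: "(int \<times> nat) set \<Rightarrow> nat" where
  "heap_size H = card H"

text \<open>Minimal pieces of a heap are exactly those resting on the axis.\<close>
definition pyramid :: "(int \<times> nat) set \<Rightarrow> bool" where
  "pyramid p \<longleftrightarrow> heap p \<and> (\<exists>!x. x \<in> p \<and> snd x = 0)"

definition right_pyramid :: "int \<Rightarrow> (int \<times> nat) set \<Rightarrow> bool" where
  "right_pyramid s p \<longleftrightarrow> pyramid p \<and> (s, 0) \<in> p \<and> (\<forall>(t,h)\<in>p. s \<le> t)"

text \<open>Left s-pyramid: bottom piece covers ]s-2, s[ and no piece lies further right.\<close>
definition left_pyramid :: "int \<Rightarrow> (int \<times> nat) set \<Rightarrow> bool" where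
  "left_pyramid s p \<longleftrightarrow> pyramid p \<and> (s - piece_len, 0) \<in> p \<and> (\<forall>(t,h)\<in>p. t \<le> s - piece_len)"

end

theory Submission
  imports Defs "HOL-Library.Equipollence"
begin

text \<open>A pyramid p with bottom piece ]0,2[ that is not a right 0-pyramid has pieces left of 0, and
  the lowest of them covers ]-1,1[. The pieces lying (transitively) above that piece, pushed down
  onto the axis, form a pyramid with bottom piece ]-1,1[; mirrored by t \<mapsto> 1 - t it becomes a
  pyramid with bottom piece ]0,2[ again. The remaining pieces of p form a right 0-pyramid, and
  p is recovered by dropping the upper pyramid back onto it. So pyramids of size m correspond to
  right 0-pyramids of size m together with pairs (right 0-pyramid of size k, pyramid of size
  m - k). Alternating sequences satisfy the same recursion: split off the first entry and mirror
  the remaining ones.\<close>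

lemma concurrent_iff: "concurrent s t \<longleftrightarrow> \<bar>s - t\<bar> < 2"
  by (simp add: concurrent_def piece_len_def)

lemma concurrent_sym: "concurrent s t \<longleftrightarrow> concurrent t s"
  by (auto simp: concurrent_iff)

lemma concurrent_refl [simp]: "concurrent s s"
  by (simp add: concurrent_iff)

section \<open>Heaps as stacked configurations\<close>

text \<open>An intrinsic description of heaps, see heap_iff_stacked.\<close>

definition stacked :: "(int \<times> nat) set \<Rightarrow> bool" where
  "stacked H \<longleftrightarrow> finite H \<and>
     (\<forall>x\<in>H. \<forall>y\<in>H. x \<noteq> y \<and> concurrent (fst x) (fst y) \<longrightarrow> snd x \<noteq> snd y) \<and>
     (\<forall>x\<in>H. 0 < snd x \<longrightarrow> (\<exists>y\<in>H. concurrent (fst x) (fst y) \<and> snd y = snd x - 1))"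

lemma stackedI:
  assumes "finite H"
    and "\<And>x y. x \<in> H \<Longrightarrow> y \<in> H \<Longrightarrow> x \<noteq> y \<Longrightarrow> concurrent (fst x) (fst y) \<Longrightarrow> snd x \<noteq> snd y"
    and "\<And>x. x \<in> H \<Longrightarrow> 0 < snd x \<Longrightarrow> \<exists>y\<in>H. concurrent (fst x) (fst y) \<and> snd y = snd x - 1"
  shows "stacked H"
  using assms unfolding stacked_def by blast

lemma stacked_finite: "stacked H \<Longrightarrow> finite H"
  unfolding stacked_def by blast

lemma stacked_levels_distinct:
  "stacked H \<Longrightarrow> x \<in> H \<Longrightarrow> y \<in> H \<Longrightarrow> x \<noteq> y \<Longrightarrow> concurrent (fst x) (fst y) \<Longrightarrow> snd x \<noteq> snd y"
  unfolding stacked_def by blast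

lemma stacked_supported:
  "stacked H \<Longrightarrow> x \<in> H \<Longrightarrow> 0 < snd x \<Longrightarrow> \<exists>y\<in>H. concurrent (fst x) (fst y) \<and> snd y = snd x - 1"
  unfolding stacked_def by blast

lemma drop_piece_eq_insert:
  assumes "finite H"
    and below: "\<forall>y\<in>H. concurrent s (fst y) \<longrightarrow> snd y < l"
    and support: "0 < l \<Longrightarrow> \<exists>y\<in>H. concurrent s (fst y) \<and> snd y = l - 1"
  shows "drop_piece H s = insert (s, l) H"
proof -
  let ?S = "{h. \<exists>t. (t, h) \<in> H \<and> concurrent s t}"
  have "finite ?S"
    using finite_subset[of ?S "snd ` H"] \<open>finite H\<close> by force
  have "(if \<exists>(t, h)\<in>H. concurrent s t then Suc (Max ?S) else 0) = l"
  proof (cases "l = 0")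
    case True
    then show ?thesis using below by auto
  next
    case False
    then obtain y where y: "y \<in> H" "concurrent s (fst y)" "snd y = l - 1"
      using support by blast
    then have "snd y \<in> ?S" by (cases y) auto
    moreover have "h < l" if "h \<in> ?S" for h using that below by auto
    ultimately have "Max ?S = l - 1"
      using \<open>finite ?S\<close> y(3) by (intro Max_eqI) fastforce+
    then show ?thesis using False y by (cases y) auto
  qed
  then show ?thesis unfolding drop_piece_def by simp
qed

lemma drop_piece_level_exists:
  fixes H :: "(int \<times> nat) set"
  assumes "finite H"
  shows "\<exists>l. (\<forall>y\<in>H. concurrent s (fst y) \<longrightarrow> snd y < l)
           \<and> (0 < l \<longrightarrow> (\<exists>y\<in>H. concurrent s (fst y) \<and> snd y = l - 1))"
proof (cases "\<exists>y\<in>H. concurrent s (fst y)")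
  case True
  let ?S = "snd ` {y\<in>H. concurrent s (fst y)}"
  have "finite ?S" "?S \<noteq> {}" using assms True by auto
  then have "Max ?S \<in> ?S" "\<forall>h\<in>?S. h \<le> Max ?S" by simp_all
  then show ?thesis by (intro exI[of _ "Suc (Max ?S)"]) force
qed auto

lemma stacked_insert:
  assumes "stacked H"
    and below: "\<forall>y\<in>H. concurrent s (fst y) \<longrightarrow> snd y < l"
    and support: "0 < l \<Longrightarrow> \<exists>y\<in>H. concurrent s (fst y) \<and> snd y = l - 1"
  shows "stacked (insert (s, l) H)"
proof (rule stackedI)
  show "finite (insert (s, l) H)" using stacked_finite[OF assms(1)] by simp
next
  fix x y assume "x \<in> insert (s, l) H" "y \<in> insert (s, l) H" "x \<noteq> y"
    and "concurrent (fst x) (fst y)"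
  then show "snd x \<noteq> snd y"
    using stacked_levels_distinct[OF assms(1)] below concurrent_sym by fastforce
next
  fix x assume "x \<in> insert (s, l) H" "0 < snd x"
  then show "\<exists>y\<in>insert (s, l) H. concurrent (fst x) (fst y) \<and> snd y = snd x - 1"
    using stacked_supported[OF assms(1)] support by fastforce
qed

lemma heap_stacked: "heap H \<Longrightarrow> stacked H"
proof (induction rule: heap.induct)
  case heap_empty
  then show ?case by (simp add: stacked_def)
next
  case (heap_drop H s)
  have "finite H" using heap_drop.IH by (rule stacked_finite)
  then obtain l where "\<forall>y\<in>H. concurrent s (fst y) \<longrightarrow> snd y < l"
      and "0 < l \<longrightarrow> (\<exists>y\<in>H. concurrent s (fst y) \<and> snd y = l - 1)"
    using drop_piece_level_exists by blast
  then show ?case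
    using drop_piece_eq_insert[OF \<open>finite H\<close>] stacked_insert[OF heap_drop.IH] by simp
qed

lemma stacked_remove_top:
  assumes H: "stacked H" and "x \<in> H" and top: "\<forall>y\<in>H. snd y \<le> snd x"
  shows "stacked (H - {x})" and "drop_piece (H - {x}) (fst x) = H"
proof -
  have support: "\<exists>y\<in>H - {x}. concurrent (fst z) (fst y) \<and> snd y = snd z - 1"
    if z: "z \<in> H" "0 < snd z" for z
  proof -
    obtain y where "y \<in> H" "concurrent (fst z) (fst y)" "snd y = snd z - 1"
      using stacked_supported[OF H z] by blast
    moreover have "y \<noteq> x" using top z \<open>snd y = snd z - 1\<close> by force
    ultimately show ?thesis by blast
  qed
  show "stacked (H - {x})"
    using stacked_finite[OF H] stacked_levels_distinct[OF H] support
    by (intro stackedI) auto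
  have "\<forall>y\<in>H - {x}. concurrent (fst x) (fst y) \<longrightarrow> snd y < snd x"
    using top stacked_levels_distinct[OF H _ \<open>x \<in> H\<close>] concurrent_sym by (fastforce simp: le_less)
  then have "drop_piece (H - {x}) (fst x) = insert (fst x, snd x) (H - {x})"
    using stacked_finite[OF H] support[OF \<open>x \<in> H\<close>] by (intro drop_piece_eq_insert) auto
  then show "drop_piece (H - {x}) (fst x) = H" using \<open>x \<in> H\<close> by auto
qed

lemma stacked_heap: "stacked H \<Longrightarrow> heap H"
proof (induction "card H" arbitrary: H rule: less_induct)
  case less
  show ?case
  proof (cases "H = {}")
    case True
    then show ?thesis by (simp add: heap_empty)
  next
    case False
    have "finite H" using less.prems by (rule stacked_finite)
    then have "Max (snd ` H) \<in> snd ` H" using False by simp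
    then obtain x where "x \<in> H" "snd x = Max (snd ` H)" by auto
    then have top: "\<forall>y\<in>H. snd y \<le> snd x" using \<open>finite H\<close> by simp
    note remove = stacked_remove_top[OF less.prems \<open>x \<in> H\<close> top]
    have "heap (H - {x})"
      using less.hyps card_Diff1_less[OF \<open>finite H\<close> \<open>x \<in> H\<close>] remove(1) by blast
    then show ?thesis using heap_drop remove(2) by metis
  qed
qed

lemma heap_iff_stacked: "heap H \<longleftrightarrow> stacked H"
  using heap_stacked stacked_heap by blast

section \<open>Dropping one configuration onto another\<close>

text \<open>The level at which piece x of Q comes to rest when the pieces of Q are dropped, in the order
  of their levels in Q, onto the heap B.\<close>

function drop_level :: "(int \<times> nat) set \<Rightarrow> (int \<times> nat) set \<Rightarrow> int \<times> nat \<Rightarrow> nat" where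
  "drop_level B Q x = Max (insert 0 ((\<lambda>y. Suc (snd y)) ` {y\<in>B. concurrent (fst x) (fst y)}
      \<union> (\<lambda>y. Suc (drop_level B Q y)) ` {y\<in>Q. concurrent (fst x) (fst y) \<and> snd y < snd x}))"
  by pat_completeness auto
termination by (relation "measure (\<lambda>(B, Q, x). snd x)") auto

declare drop_level.simps [simp del]

definition drop_onto :: "(int \<times> nat) set \<Rightarrow> (int \<times> nat) set \<Rightarrow> (int \<times> nat) set" where
  "drop_onto B Q = (\<lambda>x. (fst x, drop_level B Q x)) ` Q"

definition separated :: "(int \<times> nat) set \<Rightarrow> bool" where
  "separated Q \<longleftrightarrow> finite Q \<and>
     (\<forall>x\<in>Q. \<forall>y\<in>Q. x \<noteq> y \<and> concurrent (fst x) (fst y) \<longrightarrow> snd x \<noteq> snd y)"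

lemma stacked_separated: "stacked H \<Longrightarrow> separated H"
  by (simp add: stacked_def separated_def)

lemma separated_subset: "separated H \<Longrightarrow> Q \<subseteq> H \<Longrightarrow> separated Q"
  unfolding separated_def by (meson finite_subset subsetD)

lemma drop_level_candidates_finite:
  assumes "finite B" "finite Q"
  shows "finite (insert 0 ((\<lambda>y. Suc (snd y)) ` {y\<in>B. concurrent (fst x) (fst y)}
      \<union> (\<lambda>y. Suc (drop_level B Q y)) ` {y\<in>Q. concurrent (fst x) (fst y) \<and> snd y < snd x}))"
  using assms by simp

lemma drop_level_above_base:
  assumes "finite B" "finite Q" "y \<in> B" "concurrent (fst x) (fst y)"
  shows "snd y < drop_level B Q x"
proof -
  have "Suc (snd y) \<le> drop_level B Q x"
    unfolding drop_level.simps[of B Q x]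
    by (rule Max_ge[OF drop_level_candidates_finite[OF assms(1,2)]]) (use assms in blast)
  then show ?thesis by simp
qed

lemma drop_level_mono:
  assumes "finite B" "finite Q" "y \<in> Q" "concurrent (fst x) (fst y)" "snd y < snd x"
  shows "drop_level B Q y < drop_level B Q x"
proof -
  have "Suc (drop_level B Q y) \<le> drop_level B Q x"
    unfolding drop_level.simps[of B Q x]
    by (rule Max_ge[OF drop_level_candidates_finite[OF assms(1,2)]]) (use assms in blast)
  then show ?thesis by simp
qed

lemma drop_level_supported:
  assumes "finite B" "finite Q" "0 < drop_level B Q x"
  shows "(\<exists>y\<in>B. concurrent (fst x) (fst y) \<and> Suc (snd y) = drop_level B Q x) \<or>
         (\<exists>y\<in>Q. concurrent (fst x) (fst y) \<and> snd y < snd x \<and> Suc (drop_level B Q y) = drop_level B Q x)"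
  using Max_in[OF drop_level_candidates_finite[OF assms(1,2)], of x] assms(3)
  unfolding drop_level.simps[of B Q x, symmetric] by auto

lemma drop_level_less_iff:
  assumes "finite B" "separated Q" "x \<in> Q" "y \<in> Q" "concurrent (fst x) (fst y)"
  shows "drop_level B Q y < drop_level B Q x \<longleftrightarrow> snd y < snd x"
proof -
  have "finite Q" using assms(2) by (simp add: separated_def)
  have "x = y" if "snd x = snd y" using that assms unfolding separated_def by blast
  then show ?thesis
    using drop_level_mono[OF assms(1) \<open>finite Q\<close> assms(4,5)]
      drop_level_mono[OF assms(1) \<open>finite Q\<close> assms(3), of y] assms(5) concurrent_sym
    by (metis less_asym linorder_neqE_nat)
qed

lemma drop_level_distinct:
  assumes "finite B" "separated Q" "x \<in> Q" "y \<in> Q" "x \<noteq> y" "concurrent (fst x) (fst y)"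
  shows "drop_level B Q x \<noteq> drop_level B Q y"
proof -
  have yx: "concurrent (fst y) (fst x)" using assms(6) concurrent_sym by blast
  have "snd x \<noteq> snd y" using assms(2-6) unfolding separated_def by blast
  then consider "snd y < snd x" | "snd x < snd y" by linarith
  then show ?thesis
    using drop_level_less_iff[OF assms(1-4,6)] drop_level_less_iff[OF assms(1,2,4,3) yx]
    by cases auto
qed

lemma inj_on_drop_level:
  assumes "finite B" "separated Q"
  shows "inj_on (\<lambda>x. (fst x, drop_level B Q x)) Q"
  using drop_level_distinct[OF assms] by (intro inj_onI) (metis concurrent_refl prod.inject)

lemma card_drop_onto: "finite B \<Longrightarrow> separated Q \<Longrightarrow> card (drop_onto B Q) = card Q"
  unfolding drop_onto_def using inj_on_drop_level by (simp add: card_image)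

lemma drop_onto_disjoint:
  assumes "finite B" "finite Q"
  shows "B \<inter> drop_onto B Q = {}"
proof (rule ccontr)
  assume "B \<inter> drop_onto B Q \<noteq> {}"
  then obtain x where "x \<in> Q" "(fst x, drop_level B Q x) \<in> B" by (auto simp: drop_onto_def)
  then show False using drop_level_above_base[OF assms, of "(fst x, drop_level B Q x)" x] by simp
qed

lemma drop_onto_supported:
  assumes "finite B" "finite Q" "x \<in> Q" "0 < drop_level B Q x"
  shows "\<exists>y\<in>B \<union> drop_onto B Q. concurrent (fst x) (fst y) \<and> snd y = drop_level B Q x - 1"
  using drop_level_supported[OF assms(1,2,4)]
proof (elim disjE bexE conjE)
  fix y assume "y \<in> Q" "concurrent (fst x) (fst y)" "Suc (drop_level B Q y) = drop_level B Q x"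
  then show ?thesis unfolding drop_onto_def by (intro bexI[of _ "(fst y, drop_level B Q y)"]) auto
qed force

lemma stacked_union_drop_onto:
  assumes B: "stacked B" and Q: "separated Q"
  shows "stacked (B \<union> drop_onto B Q)"
proof -
  have fB: "finite B" using B by (rule stacked_finite)
  have fQ: "finite Q" using Q by (simp add: separated_def)
  show ?thesis
  proof (rule stackedI)
    show "finite (B \<union> drop_onto B Q)" using fB fQ by (simp add: drop_onto_def)
  next
    fix a b assume "a \<in> B \<union> drop_onto B Q" "b \<in> B \<union> drop_onto B Q" "a \<noteq> b"
      and c: "concurrent (fst a) (fst b)"
    then consider "a \<in> B" "b \<in> B"
      | x where "x \<in> Q" "a = (fst x, drop_level B Q x)" "b \<in> B"
      | y where "a \<in> B" "y \<in> Q" "b = (fst y, drop_level B Q y)"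
      | x y where "x \<in> Q" "a = (fst x, drop_level B Q x)" "y \<in> Q" "b = (fst y, drop_level B Q y)"
      unfolding drop_onto_def by blast
    then show "snd a \<noteq> snd b"
    proof cases
      case 1
      then show ?thesis using stacked_levels_distinct[OF B] \<open>a \<noteq> b\<close> c by blast
    next
      case 2
      then show ?thesis using drop_level_above_base[OF fB fQ \<open>b \<in> B\<close>] c by fastforce
    next
      case 3
      then show ?thesis using drop_level_above_base[OF fB fQ \<open>a \<in> B\<close>, of y] c concurrent_sym by fastforce
    next
      case 4
      then have "x \<noteq> y" using \<open>a \<noteq> b\<close> by auto
      then show ?thesis using drop_level_distinct[OF fB Q 4(1,3)] 4 c by auto
    qed
  next
    fix a assume a: "a \<in> B \<union> drop_onto B Q" and "0 < snd a"
    show "\<exists>y\<in>B \<union> drop_onto B Q. concurrent (fst a) (fst y) \<and> snd y = snd a - 1"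
    proof (cases "a \<in> B")
      case True
      then show ?thesis using stacked_supported[OF B _ \<open>0 < snd a\<close>] by blast
    next
      case False
      then obtain x where "x \<in> Q" "a = (fst x, drop_level B Q x)"
        using a by (auto simp: drop_onto_def)
      then show ?thesis using drop_onto_supported[OF fB fQ] \<open>0 < snd a\<close> by simp
    qed
  qed
qed

text \<open>Drop levels depend only on the horizontal positions of Q and on the relative vertical order
  of its concurrent pieces.\<close>

lemma drop_level_reindex:
  assumes "finite B"
    and fst_\<sigma>: "\<forall>x\<in>Q. fst (\<sigma> x) = fst x"
    and order: "\<forall>x\<in>Q. \<forall>y\<in>Q. concurrent (fst x) (fst y) \<longrightarrow> (snd y < snd x \<longleftrightarrow> snd (\<sigma> y) < snd (\<sigma> x))"
  shows "x \<in> Q \<Longrightarrow> drop_level B (\<sigma> ` Q) (\<sigma> x) = drop_level B Q x"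
proof (induction "snd x" arbitrary: x rule: less_induct)
  case less
  have lower: "{y\<in>\<sigma> ` Q. concurrent (fst (\<sigma> x)) (fst y) \<and> snd y < snd (\<sigma> x)}
     = \<sigma> ` {y\<in>Q. concurrent (fst x) (fst y) \<and> snd y < snd x}"
  proof (intro equalityI subsetI)
    fix z assume z: "z \<in> {y\<in>\<sigma> ` Q. concurrent (fst (\<sigma> x)) (fst y) \<and> snd y < snd (\<sigma> x)}"
    then obtain y where y: "y \<in> Q" "z = \<sigma> y" by blast
    then have c: "concurrent (fst x) (fst y)" using z fst_\<sigma> less.prems by simp
    then have "snd y < snd x" using order[rule_format, OF less.prems y(1) c] y z by simp
    then show "z \<in> \<sigma> ` {y\<in>Q. concurrent (fst x) (fst y) \<and> snd y < snd x}" using y c by blast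
  next
    fix z assume "z \<in> \<sigma> ` {y\<in>Q. concurrent (fst x) (fst y) \<and> snd y < snd x}"
    then obtain y where y: "y \<in> Q" "z = \<sigma> y" and c: "concurrent (fst x) (fst y)" "snd y < snd x"
      by blast
    then have "snd (\<sigma> y) < snd (\<sigma> x)" using order[rule_format, OF less.prems y(1) c(1)] by simp
    then show "z \<in> {y\<in>\<sigma> ` Q. concurrent (fst (\<sigma> x)) (fst y) \<and> snd y < snd (\<sigma> x)}"
      using y c fst_\<sigma> less.prems by simp
  qed
  have "(\<lambda>y. Suc (drop_level B (\<sigma> ` Q) y)) ` \<sigma> ` {y\<in>Q. concurrent (fst x) (fst y) \<and> snd y < snd x}
     = (\<lambda>y. Suc (drop_level B Q y)) ` {y\<in>Q. concurrent (fst x) (fst y) \<and> snd y < snd x}"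
    unfolding image_image using less.hyps by (intro image_cong) auto
  then show ?case
    by (subst (1 2) drop_level.simps) (simp only: lower, simp add: fst_\<sigma> less.prems)
qed

lemma drop_onto_drop_onto:
  assumes "finite B" "finite B'" "separated Q"
  shows "drop_onto B (drop_onto B' Q) = drop_onto B Q"
proof -
  let ?\<sigma> = "\<lambda>x. (fst x, drop_level B' Q x)"
  have "drop_level B (?\<sigma> ` Q) (?\<sigma> x) = drop_level B Q x" if "x \<in> Q" for x
    using drop_level_reindex[OF assms(1) _ _ that, where \<sigma> = ?\<sigma>]
      drop_level_less_iff[OF assms(2,3)] by simp
  then show ?thesis unfolding drop_onto_def image_image by (intro image_cong) auto
qed

definition downward_closed :: "(int \<times> nat) set \<Rightarrow> (int \<times> nat) set \<Rightarrow> bool" where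
  "downward_closed H D \<longleftrightarrow>
     (\<forall>x\<in>H. \<forall>y\<in>D. concurrent (fst x) (fst y) \<and> snd x < snd y \<longrightarrow> x \<in> D)"

lemma stacked_downward_closed:
  assumes H: "stacked H" and "D \<subseteq> H" and down: "downward_closed H D"
  shows "stacked D"
proof (rule stackedI)
  show "finite D" using stacked_finite[OF H] \<open>D \<subseteq> H\<close> finite_subset by blast
next
  fix x y assume "x \<in> D" "y \<in> D" "x \<noteq> y" "concurrent (fst x) (fst y)"
  then show "snd x \<noteq> snd y" using stacked_levels_distinct[OF H] \<open>D \<subseteq> H\<close> by blast
next
  fix y assume "y \<in> D" "0 < snd y"
  then obtain z where "z \<in> H" "concurrent (fst y) (fst z)" "snd z = snd y - 1"
    using stacked_supported[OF H] \<open>D \<subseteq> H\<close> by blast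
  moreover have "z \<in> D"
    using down calculation \<open>y \<in> D\<close> \<open>0 < snd y\<close> concurrent_sym
    unfolding downward_closed_def by force
  ultimately show "\<exists>z\<in>D. concurrent (fst y) (fst z) \<and> snd z = snd y - 1" by blast
qed

lemma drop_level_complement:
  assumes H: "stacked H" and "D \<subseteq> H" and down: "downward_closed H D"
  shows "x \<in> H - D \<Longrightarrow> drop_level D (H - D) x = snd x"
proof (induction "snd x" arbitrary: x rule: less_induct)
  case less
  have fD: "finite D" and fU: "finite (H - D)"
    using stacked_finite[OF H] \<open>D \<subseteq> H\<close> finite_subset by auto
  have "snd x \<le> drop_level D (H - D) x"
  proof (cases "snd x = 0")
    case False
    then obtain y where y: "y \<in> H" "concurrent (fst x) (fst y)" "snd y = snd x - 1"
      using stacked_supported[OF H, of x] less.prems by auto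
    show ?thesis
    proof (cases "y \<in> D")
      case True
      then show ?thesis using drop_level_above_base[OF fD fU True y(2)] y False by simp
    next
      case False
      then have "y \<in> H - D" "snd y < snd x" using y \<open>snd x \<noteq> 0\<close> by auto
      then show ?thesis
        using drop_level_mono[OF fD fU _ y(2)] less.hyps y(3) by fastforce
    qed
  qed simp
  moreover have "drop_level D (H - D) x \<le> snd x"
  proof (cases "drop_level D (H - D) x = 0")
    case False
    then have "0 < drop_level D (H - D) x" by simp
    from drop_level_supported[OF fD fU this] show ?thesis
    proof (elim disjE bexE conjE)
      fix y assume y: "y \<in> D" "concurrent (fst x) (fst y)" "Suc (snd y) = drop_level D (H - D) x"
      have "y \<noteq> x" "y \<in> H" using y less.prems \<open>D \<subseteq> H\<close> by auto
      then have "snd x \<noteq> snd y" using stacked_levels_distinct[OF H] less.prems y(2) by blast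
      moreover have "\<not> snd x < snd y" using down less.prems y unfolding downward_closed_def by blast
      ultimately show ?thesis using y by simp
    next
      fix y assume "y \<in> H - D" "snd y < snd x" "Suc (drop_level D (H - D) y) = drop_level D (H - D) x"
      then show ?thesis using less.hyps by fastforce
    qed
  qed simp
  ultimately show ?case by simp
qed

lemma union_drop_onto_complement:
  assumes "stacked H" "D \<subseteq> H" "downward_closed H D"
  shows "D \<union> drop_onto D (H - D) = H"
proof -
  have "drop_onto D (H - D) = H - D"
    unfolding drop_onto_def using drop_level_complement[OF assms] by (auto simp: image_iff)
  then show ?thesis using \<open>D \<subseteq> H\<close> by auto
qed

lemma drop_onto_empty_stacked: "stacked Q \<Longrightarrow> drop_onto {} Q = Q"
  using union_drop_onto_complement[of Q "{}"] by (simp add: downward_closed_def)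

section \<open>Pyramids and the pieces above a piece\<close>

lemma pyramid_iff_stacked: "pyramid p \<longleftrightarrow> stacked p \<and> (\<exists>!x. x \<in> p \<and> snd x = 0)"
  by (simp add: pyramid_def heap_iff_stacked)

lemma pyramid_bottom_unique: "pyramid p \<Longrightarrow> c \<in> p \<Longrightarrow> snd c = 0 \<Longrightarrow> x \<in> p \<Longrightarrow> snd x = 0 \<Longrightarrow> x = c"
  unfolding pyramid_def by blast

lemma pyramidI:
  assumes "stacked p" "c \<in> p" "snd c = 0" "\<And>x. x \<in> p \<Longrightarrow> snd x = 0 \<Longrightarrow> x = c"
  shows "pyramid p"
  unfolding pyramid_iff_stacked using assms by blast

lemma heap_size_pyramid_pos: "pyramid p \<Longrightarrow> 1 \<le> heap_size p"
  unfolding pyramid_iff_stacked heap_size_def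
  by (metis card_0_eq empty_iff less_one linorder_not_le stacked_finite)

definition below :: "(int \<times> nat) set \<Rightarrow> int \<times> nat \<Rightarrow> int \<times> nat \<Rightarrow> bool" where
  "below H y z \<longleftrightarrow> y \<in> H \<and> z \<in> H \<and> concurrent (fst y) (fst z) \<and> snd y < snd z"

abbreviation lies_above :: "(int \<times> nat) set \<Rightarrow> int \<times> nat \<Rightarrow> int \<times> nat \<Rightarrow> bool" where
  "lies_above H \<equiv> (below H)\<^sup>*\<^sup>*"

definition upset :: "(int \<times> nat) set \<Rightarrow> int \<times> nat \<Rightarrow> (int \<times> nat) set" where
  "upset H b = {x. lies_above H b x}"

lemma lies_above_cases: "lies_above H b x \<Longrightarrow> x = b \<or> (b \<in> H \<and> x \<in> H \<and> snd b < snd x)"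
  by (induction rule: rtranclp_induct) (auto simp: below_def)

lemma upset_subset: "b \<in> H \<Longrightarrow> upset H b \<subseteq> H"
  unfolding upset_def using lies_above_cases by blast

lemma downward_closed_diff_upset: "downward_closed H (H - upset H b)"
  unfolding downward_closed_def upset_def below_def
  by (metis (mono_tags, lifting) DiffD1 DiffD2 DiffI mem_Collect_eq rtranclp.rtrancl_into_rtrancl)

lemma lies_above_bottom:
  assumes Q: "stacked Q" and c: "c \<in> Q" and bottom: "\<forall>x\<in>Q. snd x = 0 \<longrightarrow> x = c"
  shows "x \<in> Q \<Longrightarrow> lies_above Q c x"
proof (induction "snd x" arbitrary: x rule: less_induct)
  case less
  show ?case
  proof (cases "snd x = 0")
    case True
    then show ?thesis using bottom less.prems by auto
  next
    case False
    then obtain y where y: "y \<in> Q" "concurrent (fst x) (fst y)" "snd y = snd x - 1"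
      using stacked_supported[OF Q less.prems] by auto
    then have "lies_above Q c y" using less.hyps False by simp
    moreover have "below Q y x" using y less.prems False concurrent_sym by (auto simp: below_def)
    ultimately show ?thesis by (rule rtranclp.rtrancl_into_rtrancl)
  qed
qed

lemma pyramid_drop_upset:
  assumes H: "stacked H" and "b \<in> H"
  shows "pyramid (drop_onto {} (upset H b))" "(fst b, 0) \<in> drop_onto {} (upset H b)"
    "card (drop_onto {} (upset H b)) = card (upset H b)"
proof -
  let ?U = "upset H b"
  have U: "separated ?U" using separated_subset[OF stacked_separated[OF H] upset_subset[OF \<open>b \<in> H\<close>]] .
  then have "finite ?U" by (simp add: separated_def)
  have "b \<in> ?U" by (simp add: upset_def)
  have "drop_level {} ?U b = 0"
  proof (rule ccontr)
    assume "drop_level {} ?U b \<noteq> 0"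
    then obtain w where "w \<in> ?U" "snd w < snd b"
      using drop_level_supported[OF finite.emptyI \<open>finite ?U\<close>, where x = b] by auto
    then show False using lies_above_cases[of H b w] unfolding upset_def by force
  qed
  then show bottom: "(fst b, 0) \<in> drop_onto {} ?U"
    using \<open>b \<in> ?U\<close> unfolding drop_onto_def by (metis (no_types, lifting) image_eqI)
  have bottom_only: "x = b" if x: "x \<in> ?U" "drop_level {} ?U x = 0" for x
  proof (rule ccontr)
    assume "x \<noteq> b"
    moreover have "lies_above H b x" using x(1) by (simp add: upset_def)
    ultimately obtain w where "lies_above H b w" "below H w x"
      by (metis rtranclp.cases)
    then have "drop_level {} ?U w < drop_level {} ?U x"
      using drop_level_mono[of "{}" ?U w x] \<open>finite ?U\<close> concurrent_sym
      by (simp add: below_def upset_def)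
    then show False using x(2) by simp
  qed
  have "x = (fst b, 0)" if x: "x \<in> drop_onto {} ?U" "snd x = 0" for x
  proof -
    obtain y where y: "y \<in> ?U" "x = (fst y, drop_level {} ?U y)"
      using x(1) unfolding drop_onto_def by blast
    then have "y = b" using bottom_only x(2) by auto
    then show ?thesis using y \<open>drop_level {} ?U b = 0\<close> by simp
  qed
  moreover have "stacked (drop_onto {} ?U)"
    using stacked_union_drop_onto[of "{}" ?U] U by (simp add: stacked_def)
  ultimately show "pyramid (drop_onto {} ?U)" using pyramidI[OF _ bottom] by simp
  show "card (drop_onto {} ?U) = card ?U" using card_drop_onto[OF _ U] by simp
qed

lemma lies_above_drop_onto:
  assumes "finite D" and Q: "separated Q"
  shows "lies_above Q a x \<Longrightarrow> lies_above (D \<union> drop_onto D Q) (fst a, drop_level D Q a) (fst x, drop_level D Q x)"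
proof (induction rule: rtranclp_induct)
  case (step y z)
  have "finite Q" using Q by (simp add: separated_def)
  have yz: "y \<in> Q" "z \<in> Q" "concurrent (fst y) (fst z)" "snd y < snd z"
    using step.hyps(2) by (auto simp: below_def)
  then have "drop_level D Q y < drop_level D Q z"
    using drop_level_mono[OF \<open>finite D\<close> \<open>finite Q\<close>] concurrent_sym by blast
  then have "below (D \<union> drop_onto D Q) (fst y, drop_level D Q y) (fst z, drop_level D Q z)"
    using yz unfolding below_def drop_onto_def by auto
  with step.IH show ?case by (rule rtranclp.rtrancl_into_rtrancl)
qed simp

lemma lies_above_drop_onto_closed:
  assumes "finite D" "finite Q"
  shows "lies_above (D \<union> drop_onto D Q) a z \<Longrightarrow> a \<in> drop_onto D Q \<Longrightarrow> z \<in> drop_onto D Q"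
proof (induction rule: rtranclp_induct)
  case (step y z)
  then obtain w where w: "w \<in> Q" "y = (fst w, drop_level D Q w)" by (auto simp: drop_onto_def)
  have z: "z \<in> D \<union> drop_onto D Q" "concurrent (fst y) (fst z)" "snd y < snd z"
    using step.hyps(2) by (auto simp: below_def)
  show ?case
  proof (rule ccontr)
    assume "z \<notin> drop_onto D Q"
    then have "snd z < drop_level D Q w"
      using drop_level_above_base[OF assms, of z w] z w by simp
    then show False using z(3) w by simp
  qed
qed simp

section \<open>Mirror images\<close>

text \<open>Reflection of the line by t \<mapsto> 1 - t; it interchanges right 0-pyramids and left 1-pyramids.\<close>

definition mirror_piece :: "int \<times> nat \<Rightarrow> int \<times> nat" where
  "mirror_piece x = (-1 - fst x, snd x)"

definition mirror :: "(int \<times> nat) set \<Rightarrow> (int \<times> nat) set" where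
  "mirror p = mirror_piece ` p"

lemma mirror_piece_mirror_piece [simp]: "mirror_piece (mirror_piece x) = x"
  by (simp add: mirror_piece_def)

lemma mirror_mirror [simp]: "mirror (mirror p) = p"
  by (simp add: mirror_def image_image)

lemma mem_mirror: "x \<in> mirror p \<longleftrightarrow> mirror_piece x \<in> p"
  unfolding mirror_def by (metis image_iff mirror_piece_mirror_piece)

lemma card_mirror [simp]: "card (mirror p) = card p"
  unfolding mirror_def by (metis card_image inj_on_inverseI mirror_piece_mirror_piece)

lemma concurrent_mirror_piece:
  "concurrent (fst (mirror_piece x)) (fst (mirror_piece y)) \<longleftrightarrow> concurrent (fst x) (fst y)"
  by (simp add: mirror_piece_def concurrent_iff abs_minus_commute)

lemma stacked_mirror:
  assumes H: "stacked p" shows "stacked (mirror p)"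
proof (rule stackedI)
  show "finite (mirror p)" using stacked_finite[OF H] by (simp add: mirror_def)
next
  fix x y assume "x \<in> mirror p" "y \<in> mirror p" "x \<noteq> y" "concurrent (fst x) (fst y)"
  then show "snd x \<noteq> snd y"
    using stacked_levels_distinct[OF H, of "mirror_piece x" "mirror_piece y"]
    by (metis mem_mirror concurrent_mirror_piece mirror_piece_mirror_piece mirror_piece_def snd_conv)
next
  fix x assume "x \<in> mirror p" "0 < snd x"
  then obtain y where "y \<in> p" "concurrent (fst (mirror_piece x)) (fst y)" "snd y = snd x - 1"
    using stacked_supported[OF H, of "mirror_piece x"] by (auto simp: mem_mirror mirror_piece_def)
  moreover have "mirror_piece y \<in> mirror p" using \<open>y \<in> p\<close> by (simp add: mem_mirror)
  ultimately show "\<exists>y\<in>mirror p. concurrent (fst x) (fst y) \<and> snd y = snd x - 1"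
    using concurrent_mirror_piece[of "mirror_piece x" y]
    by (intro bexI[of _ "mirror_piece y"]) (simp_all add: mirror_piece_def)
qed

lemma pyramid_mirror: "pyramid p \<Longrightarrow> pyramid (mirror p)"
  unfolding pyramid_iff_stacked using stacked_mirror
  by (metis mem_mirror mirror_piece_mirror_piece mirror_piece_def snd_conv)

lemma left_pyramid_iff_mirror: "left_pyramid 1 p \<longleftrightarrow> right_pyramid 0 (mirror p)"
proof -
  have "(\<forall>(t, h)\<in>p. t \<le> -1) \<longleftrightarrow> (\<forall>(t, h)\<in>mirror p. 0 \<le> t)"
    unfolding mirror_def mirror_piece_def by auto
  moreover have "(-1, 0) \<in> p \<longleftrightarrow> (0, 0) \<in> mirror p" by (simp add: mem_mirror mirror_piece_def)
  ultimately show ?thesis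
    unfolding left_pyramid_def right_pyramid_def piece_len_def
    using pyramid_mirror[of p] pyramid_mirror[of "mirror p"] by auto
qed

lemma right_pyramid_iff_mirror: "right_pyramid 0 p \<longleftrightarrow> left_pyramid 1 (mirror p)"
  using left_pyramid_iff_mirror[of "mirror p"] by simp

section \<open>Decomposition of pyramids\<close>

definition pyramids :: "int \<Rightarrow> nat \<Rightarrow> (int \<times> nat) set set" where
  "pyramids s m = {p. pyramid p \<and> (s, 0) \<in> p \<and> heap_size p = m}"

definition right_pyramids :: "nat \<Rightarrow> (int \<times> nat) set set" where
  "right_pyramids m = {p. right_pyramid 0 p \<and> heap_size p = m}"

lemma mirror_mem_pyramids: "p \<in> pyramids (-1) m \<longleftrightarrow> mirror p \<in> pyramids 0 m"
  unfolding pyramids_def heap_size_def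
  using pyramid_mirror[of p] pyramid_mirror[of "mirror p"] by (auto simp: mem_mirror mirror_piece_def)

definition neg_pieces :: "(int \<times> nat) set \<Rightarrow> (int \<times> nat) set" where
  "neg_pieces p = {x\<in>p. fst x < 0}"

lemma right_pyramids_iff: "p \<in> right_pyramids m \<longleftrightarrow> p \<in> pyramids 0 m \<and> neg_pieces p = {}"
  by (auto simp: right_pyramids_def pyramids_def right_pyramid_def neg_pieces_def not_less)

text \<open>If a pyramid with bottom piece ]0,2[ has pieces left of 0, the lowest of them covers ]-1,1[:
  it rests on a piece that is not left of 0.\<close>

definition left_base :: "(int \<times> nat) set \<Rightarrow> int \<times> nat" where
  "left_base p = (-1, Min (snd ` neg_pieces p))"

lemma left_base_mem:
  assumes p: "p \<in> pyramids 0 m" and "neg_pieces p \<noteq> {}"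
  shows "left_base p \<in> p" "0 < snd (left_base p)"
proof -
  have pyr: "pyramid p" and "(0, 0) \<in> p" using p by (auto simp: pyramids_def)
  have H: "stacked p" using pyr by (simp add: pyramid_iff_stacked)
  have "finite (neg_pieces p)" using stacked_finite[OF H] by (simp add: neg_pieces_def)
  then have "Min (snd ` neg_pieces p) \<in> snd ` neg_pieces p"
    and min: "\<And>x. x \<in> p \<Longrightarrow> fst x < 0 \<Longrightarrow> Min (snd ` neg_pieces p) \<le> snd x"
    using \<open>neg_pieces p \<noteq> {}\<close> by (auto simp: neg_pieces_def)
  then obtain x where x: "x \<in> p" "fst x < 0" "snd x = Min (snd ` neg_pieces p)"
    by (auto simp: neg_pieces_def)
  have "snd x \<noteq> 0"
    using pyramid_bottom_unique[OF pyr \<open>(0, 0) \<in> p\<close> _ x(1)] x(2) by force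
  then obtain y where y: "y \<in> p" "concurrent (fst x) (fst y)" "snd y = snd x - 1"
    using stacked_supported[OF H x(1)] by auto
  have "\<not> fst y < 0" using min[OF y(1)] y(3) x(3) \<open>snd x \<noteq> 0\<close> by fastforce
  then have "fst x = -1" using y(2) x(2) by (auto simp: concurrent_iff)
  then have "left_base p = x" using x(3) by (cases x) (simp add: left_base_def)
  then show "left_base p \<in> p" "0 < snd (left_base p)" using x(1) \<open>snd x \<noteq> 0\<close> by simp_all
qed

lemma neg_pieces_above_left_base:
  assumes p: "p \<in> pyramids 0 m" and "neg_pieces p \<noteq> {}"
  shows "x \<in> p \<Longrightarrow> fst x < 0 \<Longrightarrow> lies_above p (left_base p) x"
proof (induction "snd x" arbitrary: x rule: less_induct)
  case less
  let ?b = "left_base p"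
  have pyr: "pyramid p" and "(0, 0) \<in> p" using p by (auto simp: pyramids_def)
  have H: "stacked p" using pyr by (simp add: pyramid_iff_stacked)
  have b: "?b \<in> p" "fst ?b = -1" using left_base_mem[OF assms] by (simp_all add: left_base_def)
  have "snd ?b \<le> snd x"
    using stacked_finite[OF H] less.prems by (simp add: left_base_def neg_pieces_def)
  show ?case
  proof (cases "fst x = -1")
    case True
    then have "x = ?b \<or> snd ?b < snd x"
      using b(2) \<open>snd ?b \<le> snd x\<close> by (metis le_neq_implies_less prod.expand)
    then show ?thesis using b less.prems True by (auto simp: below_def)
  next
    case False
    have "snd x \<noteq> 0"
      using pyramid_bottom_unique[OF pyr \<open>(0, 0) \<in> p\<close> _ less.prems(1)] less.prems(2) by force
    then obtain w where w: "w \<in> p" "concurrent (fst x) (fst w)" "snd w = snd x - 1"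
      using stacked_supported[OF H less.prems(1)] by auto
    have "fst w < 0" using w(2) False less.prems(2) by (simp add: concurrent_iff)
    then have "lies_above p ?b w" using less.hyps w \<open>snd x \<noteq> 0\<close> by simp
    moreover have "below p w x" using w less.prems \<open>snd x \<noteq> 0\<close> concurrent_sym by (auto simp: below_def)
    ultimately show ?thesis by (rule rtranclp.rtrancl_into_rtrancl)
  qed
qed

definition lower_part :: "(int \<times> nat) set \<Rightarrow> (int \<times> nat) set" where
  "lower_part p = p - upset p (left_base p)"

definition upper_part :: "(int \<times> nat) set \<Rightarrow> (int \<times> nat) set" where
  "upper_part p = drop_onto {} (upset p (left_base p))"

lemma pyramid_decompose:
  assumes p: "p \<in> pyramids 0 m" and neg: "neg_pieces p \<noteq> {}"
  shows "lower_part p \<in> right_pyramids (card (lower_part p))"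
    "upper_part p \<in> pyramids (-1) (m - card (lower_part p))"
    "card (lower_part p) \<in> {1..<m}"
    "lower_part p \<union> drop_onto (lower_part p) (upper_part p) = p"
proof -
  let ?b = "left_base p"
  let ?U = "upset p ?b" and ?D = "lower_part p"
  have pyr: "pyramid p" and "(0, 0) \<in> p" and "card p = m"
    using p by (auto simp: pyramids_def heap_size_def)
  have H: "stacked p" using pyr by (simp add: pyramid_iff_stacked)
  note b = left_base_mem[OF p neg]
  have "?U \<subseteq> p" using upset_subset[OF b(1)] .
  have "?b \<in> ?U" by (simp add: upset_def)
  have "(0, 0) \<notin> ?U"
    using lies_above_cases[of p ?b "(0, 0)"] b(2) by (auto simp: upset_def left_base_def)
  have D: "?D \<subseteq> p" "downward_closed p ?D"
    using downward_closed_diff_upset by (auto simp: lower_part_def)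
  have "pyramid ?D"
  proof (rule pyramidI)
    show "stacked ?D" using stacked_downward_closed[OF H D] .
    show "(0, 0) \<in> ?D" using \<open>(0, 0) \<in> p\<close> \<open>(0, 0) \<notin> ?U\<close> by (simp add: lower_part_def)
  qed (use pyramid_bottom_unique[OF pyr \<open>(0, 0) \<in> p\<close>] D(1) in auto)
  moreover have "0 \<le> fst x" if "x \<in> ?D" for x
    using neg_pieces_above_left_base[OF p neg, of x] that by (force simp: lower_part_def upset_def)
  ultimately show "?D \<in> right_pyramids (card ?D)"
    using \<open>(0, 0) \<in> p\<close> \<open>(0, 0) \<notin> ?U\<close>
    by (auto simp: right_pyramids_def right_pyramid_def heap_size_def lower_part_def)
  have "finite p" using H by (rule stacked_finite)
  then have card_p: "card p = card ?D + card ?U"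
    using card_Diff_subset[of ?U p] card_mono[of p ?U] \<open>?U \<subseteq> p\<close>
    by (simp add: lower_part_def finite_subset)
  note upper = pyramid_drop_upset[OF H b(1)]
  show "upper_part p \<in> pyramids (-1) (m - card ?D)"
    using upper card_p \<open>card p = m\<close>
    by (simp add: pyramids_def heap_size_def upper_part_def left_base_def)
  have "0 < card ?D" "0 < card ?U"
    using \<open>(0, 0) \<in> p\<close> \<open>(0, 0) \<notin> ?U\<close> \<open>?b \<in> ?U\<close> \<open>finite p\<close> \<open>?U \<subseteq> p\<close>
    by (auto simp: lower_part_def card_gt_0_iff finite_subset)
  then show "card ?D \<in> {1..<m}" using card_p \<open>card p = m\<close> by simp
  have "separated ?U" using separated_subset[OF stacked_separated[OF H] \<open>?U \<subseteq> p\<close>] .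
  then have "drop_onto ?D (upper_part p) = drop_onto ?D (p - ?D)"
    using drop_onto_drop_onto[of ?D "{}" ?U] \<open>finite p\<close> \<open>?U \<subseteq> p\<close>
    by (simp add: upper_part_def lower_part_def Diff_Diff_Int Int_absorb1 finite_subset)
  then show "?D \<union> drop_onto ?D (upper_part p) = p"
    using union_drop_onto_complement[OF H D] by simp
qed

lemma upset_union_drop_onto:
  assumes "finite D" and Q: "pyramid Q" "c \<in> Q" "snd c = 0"
  shows "upset (D \<union> drop_onto D Q) (fst c, drop_level D Q c) = drop_onto D Q"
proof -
  let ?c = "(fst c, drop_level D Q c)"
  have HQ: "stacked Q" using Q(1) by (simp add: pyramid_iff_stacked)
  then have "finite Q" "separated Q" by (simp_all add: stacked_finite stacked_separated)
  have "?c \<in> drop_onto D Q" using \<open>c \<in> Q\<close> by (simp add: drop_onto_def)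
  then have "upset (D \<union> drop_onto D Q) ?c \<subseteq> drop_onto D Q"
    using lies_above_drop_onto_closed[OF \<open>finite D\<close> \<open>finite Q\<close>] by (auto simp: upset_def)
  moreover have "(fst x, drop_level D Q x) \<in> upset (D \<union> drop_onto D Q) ?c" if "x \<in> Q" for x
    using lies_above_drop_onto[OF \<open>finite D\<close> \<open>separated Q\<close> lies_above_bottom[OF HQ \<open>c \<in> Q\<close> _ that]]
      pyramid_bottom_unique[OF Q] by (simp add: upset_def)
  ultimately show ?thesis by (auto simp: drop_onto_def)
qed

lemma pyramid_compose:
  assumes D: "D \<in> right_pyramids k" and Q: "Q \<in> pyramids (-1) n"
  shows "D \<union> drop_onto D Q \<in> pyramids 0 (k + n)"
    "neg_pieces (D \<union> drop_onto D Q) \<noteq> {}"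
    "lower_part (D \<union> drop_onto D Q) = D"
    "upper_part (D \<union> drop_onto D Q) = Q"
proof -
  let ?I = "drop_onto D Q"
  let ?H = "D \<union> ?I"
  let ?c = "(-1 :: int, drop_level D Q (-1, 0))"
  have pD: "pyramid D" and "(0, 0) \<in> D" and D_nonneg: "\<forall>x\<in>D. 0 \<le> fst x" and "card D = k"
    using D by (auto simp: right_pyramids_def right_pyramid_def heap_size_def)
  have pQ: "pyramid Q" and "(-1, 0) \<in> Q" and "card Q = n"
    using Q by (auto simp: pyramids_def heap_size_def)
  have HD: "stacked D" and HQ: "stacked Q" using pD pQ by (simp_all add: pyramid_iff_stacked)
  have fD: "finite D" and fQ: "finite Q" and sQ: "separated Q"
    using HD HQ stacked_finite stacked_separated by blast+
  have disj: "D \<inter> ?I = {}" using drop_onto_disjoint[OF fD fQ] .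
  have fI: "finite ?I" using fQ by (simp add: drop_onto_def)
  have "?c \<in> ?I" using \<open>(-1, 0) \<in> Q\<close> unfolding drop_onto_def by force
  have upset: "upset ?H ?c = ?I"
    using upset_union_drop_onto[OF fD pQ \<open>(-1, 0) \<in> Q\<close>] by simp
  then have above_c: "z = ?c \<or> snd ?c < snd z" if "z \<in> ?I" for z
    using that lies_above_cases by (fastforce simp: upset_def)
  have "0 < snd ?c"
    using drop_level_above_base[OF fD fQ \<open>(0, 0) \<in> D\<close>, of "(-1, 0)"] by (simp add: concurrent_iff)
  then have raised: "0 < snd z" if "z \<in> ?I" for z
    using above_c[OF that] by auto
  have "pyramid ?H"
    using stacked_union_drop_onto[OF HD sQ] pyramid_bottom_unique[OF pD \<open>(0, 0) \<in> D\<close>]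
      \<open>(0, 0) \<in> D\<close> by (intro pyramidI) (auto dest: raised)
  moreover have "card ?H = k + n"
    using card_Un_disjoint[OF fD fI disj] card_drop_onto[OF fD sQ] \<open>card D = k\<close> \<open>card Q = n\<close> by simp
  ultimately show "?H \<in> pyramids 0 (k + n)" using \<open>(0, 0) \<in> D\<close> by (simp add: pyramids_def heap_size_def)
  have neg: "neg_pieces ?H = {z\<in>?I. fst z < 0}"
    using D_nonneg by (force simp: neg_pieces_def)
  then show "neg_pieces ?H \<noteq> {}" using \<open>?c \<in> ?I\<close> by auto
  have "snd ?c \<le> snd z" if "z \<in> neg_pieces ?H" for z
    using that neg above_c by fastforce
  moreover have "snd ?c \<in> snd ` neg_pieces ?H" using neg \<open>?c \<in> ?I\<close> by force
  ultimately have "Min (snd ` neg_pieces ?H) = snd ?c"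
    using fI neg by (intro Min_eqI) auto
  then have "left_base ?H = ?c" by (simp add: left_base_def)
  then show "lower_part ?H = D" "upper_part ?H = Q"
    using upset disj drop_onto_drop_onto[of "{}" D Q] fD sQ drop_onto_empty_stacked[OF HQ]
    by (auto simp: lower_part_def upper_part_def)
qed

definition splits :: "(nat \<Rightarrow> 'a set) \<Rightarrow> nat \<Rightarrow> (nat \<times> (int \<times> nat) set \<times> 'a) set" where
  "splits X m = (SIGMA k:{1..<m}. right_pyramids k \<times> X (m - k))"

lemma pyramids_eqpoll_splits: "pyramids 0 m \<approx> right_pyramids m <+> splits (pyramids 0) m"
  unfolding eqpoll_def
proof
  let ?f = "\<lambda>p. if neg_pieces p = {} then Inl p
                 else Inr (card (lower_part p), lower_part p, mirror (upper_part p))"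
  let ?g = "case_sum (\<lambda>p. p) (\<lambda>(k, D, Q). D \<union> drop_onto D (mirror Q))"
  have f: "?f p \<in> right_pyramids m <+> splits (pyramids 0) m \<and> ?g (?f p) = p"
    if p: "p \<in> pyramids 0 m" for p
  proof (cases "neg_pieces p = {}")
    case True
    then show ?thesis using p right_pyramids_iff by auto
  next
    case False
    note parts = pyramid_decompose[OF p False]
    then show ?thesis
      using False mirror_mem_pyramids[of "upper_part p"] by (simp add: splits_def Plus_def)
  qed
  have g: "?g b \<in> pyramids 0 m \<and> ?f (?g b) = b"
    if b: "b \<in> right_pyramids m <+> splits (pyramids 0) m" for b
  proof (cases b)
    case (Inl p)
    then show ?thesis using b right_pyramids_iff by auto
  next
    case (Inr r)
    then obtain k D Q where "b = Inr (k, D, Q)" "k \<in> {1..<m}" "D \<in> right_pyramids k"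
      "Q \<in> pyramids 0 (m - k)"
      using b by (cases r) (auto simp: splits_def)
    moreover have "card D = k" using \<open>D \<in> right_pyramids k\<close> by (simp add: right_pyramids_def heap_size_def)
    ultimately show ?thesis
      using pyramid_compose[of D k "mirror Q" "m - k"] mirror_mem_pyramids[of "mirror Q"] by simp
  qed
  show "bij_betw ?f (pyramids 0 m) (right_pyramids m <+> splits (pyramids 0) m)"
    by (rule bij_betw_byWitness[where f' = ?g]) (use f g in blast)+
qed

section \<open>Alternating sequences\<close>

definition alternating :: "(int \<times> nat) set list \<Rightarrow> bool" where
  "alternating ps \<longleftrightarrow>
     (\<forall>i < length ps. if even i then right_pyramid 0 (ps ! i) else left_pyramid 1 (ps ! i))"

definition alt_sequences :: "nat \<Rightarrow> (int \<times> nat) set list set" where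
  "alt_sequences m = {ps. length ps \<ge> 1 \<and> alternating ps \<and> sum_list (map heap_size ps) = m}"

lemma alternating_Cons: "alternating (p # qs) \<longleftrightarrow> right_pyramid 0 p \<and> alternating (map mirror qs)"
proof -
  have "(if even (Suc j) then right_pyramid 0 ((p # qs) ! Suc j) else left_pyramid 1 ((p # qs) ! Suc j))
      \<longleftrightarrow> (if even j then right_pyramid 0 (map mirror qs ! j) else left_pyramid 1 (map mirror qs ! j))"
    if "j < length qs" for j
    using that left_pyramid_iff_mirror right_pyramid_iff_mirror by simp
  then show ?thesis unfolding alternating_def length_Cons All_less_Suc2 by simp
qed

lemma heap_size_mirror [simp]: "heap_size (mirror p) = heap_size p"
  by (simp add: heap_size_def)

lemma alternating_sum_pos: "alternating qs \<Longrightarrow> qs \<noteq> [] \<Longrightarrow> 1 \<le> sum_list (map heap_size qs)"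
proof -
  assume "alternating qs" "qs \<noteq> []"
  then have "pyramid (hd qs)"
    unfolding alternating_def right_pyramid_def left_pyramid_def by (metis hd_conv_nth length_greater_0_conv)
  then have "1 \<le> heap_size (hd qs)" by (rule heap_size_pyramid_pos)
  also have "\<dots> \<le> sum_list (map heap_size qs)"
    using \<open>qs \<noteq> []\<close> by (simp add: member_le_sum_list)
  finally show ?thesis .
qed

lemma Cons_mem_alt_sequences:
  "p # qs \<in> alt_sequences m \<longleftrightarrow>
     right_pyramid 0 p \<and> alternating (map mirror qs) \<and> heap_size p + sum_list (map heap_size qs) = m"
  by (simp add: alt_sequences_def alternating_Cons comp_def)

lemma alt_sequences_eqpoll_splits: "alt_sequences m \<approx> right_pyramids m <+> splits alt_sequences m"
  unfolding eqpoll_def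
proof
  let ?f = "\<lambda>ps. if tl ps = [] then Inl (hd ps) else Inr (heap_size (hd ps), hd ps, map mirror (tl ps))"
  let ?g = "case_sum (\<lambda>p. [p]) (\<lambda>(k, p, qs). p # map mirror qs)"
  have f: "?f ps \<in> right_pyramids m <+> splits alt_sequences m \<and> ?g (?f ps) = ps"
    if ps: "ps \<in> alt_sequences m" for ps
  proof -
    obtain p qs where "ps = p # qs" using ps by (cases ps) (auto simp: alt_sequences_def)
    then have c: "right_pyramid 0 p" "alternating (map mirror qs)"
      "heap_size p + sum_list (map heap_size qs) = m"
      using ps Cons_mem_alt_sequences by blast+
    show ?thesis
    proof (cases "qs = []")
      case True
      then show ?thesis using \<open>ps = p # qs\<close> c by (simp add: right_pyramids_def Plus_def)
    next
      case False
      have "1 \<le> sum_list (map heap_size qs)" using alternating_sum_pos[OF c(2)] False by (simp add: comp_def)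
      moreover have "1 \<le> heap_size p" using c(1) heap_size_pyramid_pos by (simp add: right_pyramid_def)
      ultimately show ?thesis
        using \<open>ps = p # qs\<close> False c
        by (auto simp: splits_def alt_sequences_def right_pyramids_def Suc_le_eq comp_def)
    qed
  qed
  have g: "?g b \<in> alt_sequences m \<and> ?f (?g b) = b"
    if b: "b \<in> right_pyramids m <+> splits alt_sequences m" for b
  proof (cases b)
    case (Inl p)
    then show ?thesis using b by (auto simp: alt_sequences_def alternating_def right_pyramids_def)
  next
    case (Inr r)
    then obtain k p qs where "b = Inr (k, p, qs)" "k \<in> {1..<m}" "p \<in> right_pyramids k"
      "qs \<in> alt_sequences (m - k)"
      using b by (cases r) (auto simp: splits_def)
    then show ?thesis
      using Cons_mem_alt_sequences[of p "map mirror qs"]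
      by (auto simp: alt_sequences_def right_pyramids_def comp_def)
  qed
  show "bij_betw ?f (alt_sequences m) (right_pyramids m <+> splits alt_sequences m)"
    by (rule bij_betw_byWitness[where f' = ?g]) (use f g in blast)+
qed

lemma pyramids_eqpoll_alt_sequences: "pyramids 0 m \<approx> alt_sequences m"
proof (induction m rule: less_induct)
  case (less m)
  have factors: "right_pyramids k \<times> pyramids 0 (m - k) \<approx> right_pyramids k \<times> alt_sequences (m - k)"
    if "k \<in> {1..<m}" for k
    using that less.IH[of "m - k"] by (simp add: times_eqpoll_cong)
  have "splits (pyramids 0) m \<approx> splits alt_sequences m"
    unfolding splits_def by (rule Sigma_eqpoll_cong[OF bij_betw_id]) (simp add: factors)
  then have "right_pyramids m <+> splits (pyramids 0) m \<approx> right_pyramids m <+> splits alt_sequences m"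
    by (simp add: sum_eqpoll_cong)
  then show ?case
    using pyramids_eqpoll_splits alt_sequences_eqpoll_splits eqpoll_trans eqpoll_sym by metis
qed

theorem lemma1:
  fixes m :: nat
  assumes "m \<ge> 1"
  shows "\<exists>f. bij_betw f
     {p. pyramid p \<and> (0, 0) \<in> p \<and> heap_size p = m}
     {ps. length ps \<ge> 1
          \<and> (\<forall>i < length ps. if even i then right_pyramid 0 (ps ! i) else left_pyramid 1 (ps ! i))
          \<and> sum_list (map heap_size ps) = m}"
  using pyramids_eqpoll_alt_sequences[of m]
  unfolding eqpoll_def pyramids_def alt_sequences_def alternating_def .

end
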